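(* Let $n$ be a positive integer. Define $z:J_n\to I_n$ by $z(A,B,C)=(A,\emptyset,BC)$, where $BC$ denotes the concatenation of $B$ followed by $C$. Then $z$ is a well-defined bijection from $J_n$ onto $I_n$.
   Context: A lattice path here is a finite (possibly empty) sequence of steps, each an up step $(1,1)$ or a down step $(1,-1)$, drawn as a polygonal line; concatenation $BC$ is the path consisting of the steps of $B$ followed by those of $C$. $T_n$ is the set of ordered triples $(A,B,C)$ of lattice paths such that for some nonnegative integers $i,j,k$ with $i+j+k=n$, $A$ has $i$ up and $i$ down steps, $B$ has $j$ up and $j$ down steps, and $C$ has $k$ up and $k$ down steps; each path in a triple is regarded as drawn starting (and hence ending) on the horizontal axis. $I_n$ is the set of $(A,B,C)\in T_n$ such that $B$ is empty and $C$ has both a point strictly above and a point strictly below the horizontal axis. $J_n$ is the set of $(A,B,C)\in T_n$ such that either (1) $B$ ends with a down step, $C$ is nonempty, and no point of $C$ is strictly above the horizontal axis, or (2) $B$ ends with an up step, $C$ is nonempty, and no point of $C$ is strictly below the horizontal axis. *)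

theory Defs
  imports Main
begin

text \<open>A lattice path is a list of steps: True = up step (1,1), False = down step (1,-1).
  The path is drawn starting at the origin on the horizontal axis.\<close>
type_synonym path = "bool list"

definition ups :: "path \<Rightarrow> nat" where
  "ups p = length (filter (\<lambda>s. s) p)"

definition downs :: "path \<Rightarrow> nat" where
  "downs p = length (filter (\<lambda>s. \<not> s) p)"

definition height :: "path \<Rightarrow> nat \<Rightarrow> int" where
  "height p m = (\<Sum>s\<leftarrow>take m p. if s then 1 else -1)"

text \<open>Some point of the polygonal line lies strictly above / below the axis
  (equivalently, some lattice vertex does, since the line is piecewise linear
  between vertices).\<close>
definition has_point_above :: "path \<Rightarrow> bool" where
  "has_point_above p \<longleftrightarrow> (\<exists>m\<le>length p. height p m > 0)"

definition has_point_below :: "path \<Rightarrow> bool" where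
  "has_point_below p \<longleftrightarrow> (\<exists>m\<le>length p. height p m < 0)"

definition T :: "nat \<Rightarrow> (path \<times> path \<times> path) set" where
  "T n = {(A,B,C). \<exists>i j k. i + j + k = n \<and>
      ups A = i \<and> downs A = i \<and> ups B = j \<and> downs B = j \<and> ups C = k \<and> downs C = k}"

definition I :: "nat \<Rightarrow> (path \<times> path \<times> path) set" where
  "I n = {(A,B,C) \<in> T n. B = [] \<and> has_point_above C \<and> has_point_below C}"

definition J :: "nat \<Rightarrow> (path \<times> path \<times> path) set" where
  "J n = {(A,B,C) \<in> T n.
      (B \<noteq> [] \<and> last B = False \<and> C \<noteq> [] \<and> \<not> has_point_above C) \<or>
      (B \<noteq> [] \<and> last B = True \<and> C \<noteq> [] \<and> \<not> has_point_below C)}"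

definition z :: "path \<times> path \<times> path \<Rightarrow> path \<times> path \<times> path" where
  "z t = (case t of (A,B,C) \<Rightarrow> (A, [], B @ C))"

end

theory Submission
  imports Defs
begin

text \<open>Write D = BC and k = |B|. Membership of (A,B,C) in J n says that D is balanced, that
  k is a return of D to the axis, and that after k the path D never revisits the side it has
  just left. Such a k is unique: at a later such return k' the path must arrive from the
  opposite side, and then it leaves k' towards the side forbidden by k. Such a k exists iff
  D visits both sides, namely one step after the earlier of the last visits to the two
  sides.\<close>

lemma height_Suc:
  "m < length p \<Longrightarrow> height p (Suc m) = height p m + (if p ! m then 1 else -1)"
  by (simp add: height_def take_Suc_conv_app_nth)

lemma height_length: "height p (length p) = int (ups p) - int (downs p)"
  by (induction p) (auto simp: height_def ups_def downs_def)

lemma height_take_length: "height (take k p) (length (take k p)) = height p k"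
  unfolding height_def by (metis length_take take_all_iff take_take min.commute order_refl)

lemma height_drop: "height (drop k p) m = height p (k + m) - height p k"
  by (simp add: height_def take_add)

lemma abs_height_Suc_diff: "m < length p \<Longrightarrow> \<bar>height p (Suc m) - height p m\<bar> = 1"
  by (simp add: height_Suc)

lemma T_iff:
  "(A, B, C) \<in> T n \<longleftrightarrow>
     ups A = downs A \<and> ups B = downs B \<and> ups C = downs C \<and> ups A + ups B + ups C = n"
  by (auto simp: T_def)

lemma T_take_drop_iff:
  "(A, take k D, drop k D) \<in> T n \<longleftrightarrow> (A, [], D) \<in> T n \<and> height D k = 0"
proof -
  have "ups D = ups (take k D) + ups (drop k D)" "downs D = downs (take k D) + downs (drop k D)"
    by (metis append_take_drop_id ups_def downs_def filter_append length_append)+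
  moreover have "height D k = int (ups (take k D)) - int (downs (take k D))"
    by (metis height_take_length height_length)
  ultimately show ?thesis
    by (auto simp: T_iff ups_def downs_def)
qed

lemma has_point_above_drop:
  assumes "k \<le> length D" "height D k = 0"
  shows "has_point_above (drop k D) \<longleftrightarrow> (\<exists>m\<in>{k..length D}. 0 < height D m)"
proof
  assume "has_point_above (drop k D)"
  then obtain m where "m \<le> length D - k" "0 < height D (k + m)"
    using assms(2) by (auto simp: has_point_above_def height_drop)
  then show "\<exists>m\<in>{k..length D}. 0 < height D m"
    using assms(1) by (intro bexI[of _ "k + m"]) auto
next
  assume "\<exists>m\<in>{k..length D}. 0 < height D m"
  then obtain m where "k \<le> m" "m \<le> length D" "0 < height D m"
    by auto
  then show "has_point_above (drop k D)"
    using assms(2) unfolding has_point_above_def height_drop by (intro exI[of _ "m - k"]) auto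
qed

lemma has_point_below_drop:
  assumes "k \<le> length D" "height D k = 0"
  shows "has_point_below (drop k D) \<longleftrightarrow> (\<exists>m\<in>{k..length D}. height D m < 0)"
proof
  assume "has_point_below (drop k D)"
  then obtain m where "m \<le> length D - k" "height D (k + m) < 0"
    using assms(2) by (auto simp: has_point_below_def height_drop)
  then show "\<exists>m\<in>{k..length D}. height D m < 0"
    using assms(1) by (intro bexI[of _ "k + m"]) auto
next
  assume "\<exists>m\<in>{k..length D}. height D m < 0"
  then obtain m where "k \<le> m" "m \<le> length D" "height D m < 0"
    by auto
  then show "has_point_below (drop k D)"
    using assms(2) unfolding has_point_below_def height_drop by (intro exI[of _ "m - k"]) auto
qed

text \<open>Here height D (k - 1) = \<plusminus>1 is the side D comes from before returning at k.\<close>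

definition splits_at :: "path \<Rightarrow> nat \<Rightarrow> bool" where
  "splits_at D k \<longleftrightarrow> 0 < k \<and> k < length D \<and> height D k = 0 \<and>
     (\<forall>m\<in>{k..length D}. height D m * height D (k - 1) \<le> 0)"

lemma splits_at_neighbours:
  assumes "splits_at D k"
  shows "\<bar>height D (k - 1)\<bar> = 1" "\<bar>height D (Suc k)\<bar> = 1"
    "height D (Suc k) * height D (k - 1) \<le> 0"
proof -
  have k: "0 < k" "k < length D" "height D k = 0"
    using assms by (auto simp: splits_at_def)
  show "\<bar>height D (k - 1)\<bar> = 1"
    using abs_height_Suc_diff[of "k - 1" D] k by simp
  show "\<bar>height D (Suc k)\<bar> = 1"
    using abs_height_Suc_diff[of k D] k by simp
  show "height D (Suc k) * height D (k - 1) \<le> 0"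
    using assms k by (simp add: splits_at_def)
qed

lemma splits_at_not_later:
  assumes "splits_at D k" "splits_at D k'" "k < k'"
  shows False
proof -
  define h1 h2 h3
    where "h1 = height D (k - 1)" "h2 = height D (k' - 1)" "h3 = height D (Suc k')"
  have "\<bar>h1\<bar> = 1" "\<bar>h2\<bar> = 1" "\<bar>h3\<bar> = 1" "h3 * h2 \<le> 0"
    unfolding h1_h2_h3_def using splits_at_neighbours assms(1,2) by blast+
  moreover have "h2 * h1 \<le> 0" "h3 * h1 \<le> 0"
  proof -
    have after_k: "\<forall>m\<in>{k..length D}. height D m * h1 \<le> 0" and "k' < length D"
      using assms(1,2) unfolding h1_h2_h3_def splits_at_def by auto
    then have "k' - 1 \<in> {k..length D}" "Suc k' \<in> {k..length D}"
      using assms(3) by auto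
    then show "h2 * h1 \<le> 0" "h3 * h1 \<le> 0"
      using after_k unfolding h1_h2_h3_def by blast+
  qed
  ultimately show False
    by (auto simp: abs_if split: if_splits)
qed

lemma splits_at_unique: "splits_at D k \<Longrightarrow> splits_at D k' \<Longrightarrow> k = k'"
  by (metis linorder_neqE_nat splits_at_not_later)

lemma splits_at_SucI:
  assumes "q < r" "r \<le> length D" "height D r * height D q < 0"
    and after: "\<forall>m\<in>{q<..length D}. height D m * height D q \<le> 0"
  shows "splits_at D (Suc q)"
proof -
  have "\<bar>height D (Suc q) - height D q\<bar> = 1"
    using abs_height_Suc_diff assms(1,2) by simp
  moreover have "height D (Suc q) * height D q \<le> 0" "height D q \<noteq> 0"
    using after assms(1-3) by auto
  ultimately have zero: "height D (Suc q) = 0"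
    by (auto simp: abs_if mult_le_0_iff split: if_splits)
  have "Suc q \<noteq> r"
    using zero assms(3) by auto
  then show ?thesis
    using assms zero by (auto simp: splits_at_def)
qed

lemma ex_splits_at_iff: "(\<exists>k. splits_at D k) \<longleftrightarrow> has_point_above D \<and> has_point_below D"
proof
  assume "\<exists>k. splits_at D k"
  then obtain k where k: "splits_at D k" ..
  then have "k - 1 \<le> length D" "Suc k \<le> length D"
    by (auto simp: splits_at_def)
  with splits_at_neighbours[OF k] show "has_point_above D \<and> has_point_below D"
    unfolding has_point_above_def has_point_below_def
    by (auto simp: abs_if mult_le_0_iff split: if_splits)
next
  assume "has_point_above D \<and> has_point_below D"
  then have ne: "{m. m \<le> length D \<and> 0 < height D m} \<noteq> {}"
      "{m. m \<le> length D \<and> height D m < 0} \<noteq> {}"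
    by (auto simp: has_point_above_def has_point_below_def)
  define q where "q = Max {m. m \<le> length D \<and> 0 < height D m}"
  define r where "r = Max {m. m \<le> length D \<and> height D m < 0}"
  have q: "q \<le> length D" "0 < height D q"
      "\<And>m. m \<le> length D \<Longrightarrow> 0 < height D m \<Longrightarrow> m \<le> q"
    using Max_in[OF _ ne(1)] Max_ge[of "{m. m \<le> length D \<and> 0 < height D m}"]
    unfolding q_def by auto
  have r: "r \<le> length D" "height D r < 0"
      "\<And>m. m \<le> length D \<Longrightarrow> height D m < 0 \<Longrightarrow> m \<le> r"
    using Max_in[OF _ ne(2)] Max_ge[of "{m. m \<le> length D \<and> height D m < 0}"]
    unfolding r_def by auto
  have "q \<noteq> r"
    using q r by auto
  then consider "q < r" | "r < q"
    by linarith
  then show "\<exists>k. splits_at D k"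
  proof cases
    case 1
    have "\<forall>m\<in>{q<..length D}. height D m * height D q \<le> 0"
      using q by (force simp: mult_le_0_iff)
    then show ?thesis
      using splits_at_SucI[OF 1 r(1)] q(2) r(2) by (auto simp: mult_less_0_iff)
  next
    case 2
    have "\<forall>m\<in>{r<..length D}. height D m * height D r \<le> 0"
      using r by (force simp: mult_le_0_iff)
    then show ?thesis
      using splits_at_SucI[OF 2 q(1)] q(2) r(2) by (auto simp: mult_less_0_iff)
  qed
qed

lemma take_drop_mem_J_iff:
  "(A, take k D, drop k D) \<in> J n \<longleftrightarrow> (A, [], D) \<in> T n \<and> splits_at D k"
proof (cases "0 < k \<and> k < length D \<and> height D k = 0")
  case False
  then show ?thesis
    by (auto simp: J_def splits_at_def T_take_drop_iff)
next
  case True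
  then obtain j where j: "k = Suc j" "j < length D" "height D (Suc j) = 0"
    by (cases k) auto
  then have "last (take k D) = D ! j" "height D j = (if D ! j then -1 else 1)"
    using height_Suc[of j D] by (auto simp: take_Suc_conv_app_nth)
  then show ?thesis
    using True j
    by (auto simp: J_def splits_at_def T_take_drop_iff has_point_above_drop has_point_below_drop
        not_less)
qed

lemma J_eq_take_drop:
  "J n = {(A, take k D, drop k D) | A D k. (A, [], D) \<in> T n \<and> splits_at D k}" (is "_ = ?S")
proof
  show "J n \<subseteq> ?S"
  proof
    fix t
    assume "t \<in> J n"
    moreover obtain A B C where t: "t = (A, B, C)"
      by (cases t)
    ultimately have "(A, [], B @ C) \<in> T n \<and> splits_at (B @ C) (length B)"
      using take_drop_mem_J_iff[of A "length B" "B @ C" n] by simp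
    then show "t \<in> ?S"
      unfolding t by (intro CollectI exI[of _ A] exI[of _ "B @ C"] exI[of _ "length B"]) simp
  qed
  show "?S \<subseteq> J n"
    using take_drop_mem_J_iff by blast
qed

lemma inj_on_z_J: "inj_on z (J n)"
  by (auto simp: J_eq_take_drop z_def inj_on_def dest: splits_at_unique)

lemma image_z_J: "z ` J n = I n"
proof -
  have "z ` J n = {(A, [], D) | A D. (A, [], D) \<in> T n \<and> (\<exists>k. splits_at D k)}"
    unfolding J_eq_take_drop z_def by force
  also have "\<dots> = I n"
    unfolding I_def ex_splits_at_iff by blast
  finally show ?thesis .
qed

theorem lemma4:
  fixes n :: nat
  assumes "n > 0"
  shows "z ` J n \<subseteq> I n \<and> bij_betw z (J n) (I n)"
  using inj_on_z_J image_z_J by (simp add: bij_betw_def)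

end
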